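(* Let $F:\mathbb{R}^d\times\mathbb{R}^d\to\mathbb{R}$ be twice continuously differentiable and suppose there are constants $L\le M<0$ and $0\le M'<-M$ such that for all $u,u'\in\mathbb{R}^d$: (i) every eigenvalue of the symmetric matrix $\nabla_1^2F(u,u')$ lies in $[L,M]$; (ii) every singular value of $\nabla_2\nabla_1F(u,u')$ is at most $M'$. Assume there exists $u^*\in\mathbb{R}^d$ with $u^*=\arg\max_{u\in\mathbb{R}^d}F(u,u^* )$. Let $0<\eta<-\tfrac{1}{2L}$. Then: (a) for every initial $u_0\in\mathbb{R}^d$, the sequence $u_{k+1}=\mathrm{PD}_F(u_k;u_k,\eta)$ converges to $u^*$; (b) for every integer $N_t\ge 1$ and every initial $u_0\in\mathbb{R}^d$, the sequence $u_{k+1}=U_{N_t}(u_k)$ converges to $u^*$, where $U_{N_t}(u)$ denotes the point $v_{N_t}$ obtained from $v_0=u$, $v_{j+1}=\mathrm{PD}_F(v_j;u,\eta)$ for $j=0,\dots,N_t-1$ (the behavior argument is held fixed at $u$).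
   Context: For $F:\mathbb{R}^d\times\mathbb{R}^d\to\mathbb{R}$, $\nabla_1F(u,u')=\frac{\partial}{\partial u}F(u,u')$ is the gradient in the first argument, $\nabla_1^2F(u,u')=\frac{\partial^2}{\partial u^2}F(u,u')$ the Hessian in the first argument, and $\nabla_2\nabla_1F(u,u')=\frac{\partial^2}{\partial u'\partial u}F(u,u')$ the $d\times d$ matrix of mixed second derivatives. The partial derivative step is $\mathrm{PD}_F(u;u',\eta):=u+\eta\,\nabla_1F(u,u')$ for $u,u'\in\mathbb{R}^d$, $\eta>0$. *)

theory Defs
  imports "HOL-Analysis.Analysis"
begin

definition mat_eigenvalue :: "real^'n^'n \<Rightarrow> real \<Rightarrow> bool" where
  "mat_eigenvalue A lam \<longleftrightarrow> (\<exists>v. v \<noteq> 0 \<and> A *v v = lam *\<^sub>R v)"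

definition mat_singular_value :: "real^'n^'n \<Rightarrow> real \<Rightarrow> bool" where
  "mat_singular_value A s \<longleftrightarrow> s \<ge> 0 \<and> mat_eigenvalue (transpose A ** A) (s\<^sup>2)"

text \<open>Partial derivative step; G is the gradient of F in its first argument.\<close>
definition PD :: "('v \<Rightarrow> 'v \<Rightarrow> 'v::real_vector) \<Rightarrow> 'v \<Rightarrow> 'v \<Rightarrow> real \<Rightarrow> 'v" where
  "PD G u u' eta = u + eta *\<^sub>R G u u'"

definition U_iter :: "('v \<Rightarrow> 'v \<Rightarrow> 'v::real_vector) \<Rightarrow> real \<Rightarrow> nat \<Rightarrow> 'v \<Rightarrow> 'v" where
  "U_iter G eta N u = ((\<lambda>v. PD G v u eta) ^^ N) u"

end

theory Submission
  imports Defs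
begin

text \<open>
  Write \<open>c = 1 + \<eta>M\<close> and \<open>q = c + \<eta>M'\<close>. Since \<open>\<nabla>\<^sub>1\<^sup>2F\<close> is symmetric with
  spectrum in \<open>[L, M]\<close>, the matrix \<open>I + \<eta>\<nabla>\<^sub>1\<^sup>2F\<close> has spectrum in \<open>[1 + \<eta>L, c] \<subseteq> (0, 1)\<close>,
  hence operator norm at most \<open>c\<close>; the mixed Hessian has operator norm at most \<open>M'\<close>.
  The mean value theorem then gives
  \<open>|PD(v; u) - PD(v'; u')| \<le> c |v - v'| + \<eta>M' |u - u'|\<close>. As \<open>u\<^sup>*\<close> maximises
  \<open>F(\<cdot>, u\<^sup>*)\<close>, it is a fixed point of \<open>PD(\<cdot>; u\<^sup>*)\<close>, so each partial step with behaviour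
  argument \<open>u\<close> moves \<open>v\<close> to within \<open>c |v - u\<^sup>*| + \<eta>M' |u - u\<^sup>*|\<close> of \<open>u\<^sup>*\<close>. Iterating,
  \<open>|U\<^sub>N(u) - u\<^sup>*| \<le> q |u - u\<^sup>*|\<close> for all \<open>N \<ge> 1\<close>, and \<open>q < 1\<close> because \<open>M' < -M\<close>;
  part (a) is the case \<open>N = 1\<close>.
\<close>

lemma quadratic_nonneg_imp_discriminant_le:
  fixes a b c :: real
  assumes nonneg: "\<And>t. 0 \<le> a + 2*b*t + c*t\<^sup>2" and "0 \<le> c"
  shows "b\<^sup>2 \<le> a*c"
proof (cases "c = 0")
  case True
  show ?thesis
  proof (cases "b = 0")
    case False
    have "0 \<le> a + 2*b*(-(a+1)/(2*b)) + c*(-(a+1)/(2*b))\<^sup>2" by (rule nonneg)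
    with True False show ?thesis by (simp add: field_simps)
  qed (use True nonneg[of 0] in simp)
next
  case False
  with \<open>0 \<le> c\<close> have "c > 0" by simp
  have "0 \<le> (a + 2*b*(-b/c) + c*(-b/c)\<^sup>2) * c"
    using nonneg[of "-b/c"] \<open>c > 0\<close> by simp
  also have "\<dots> = a*c - b\<^sup>2" using \<open>c > 0\<close> by (simp add: field_simps power2_eq_square)
  finally show ?thesis by simp
qed

lemma psd_matrix_Cauchy_Schwarz:
  fixes P :: "real^'n^'n" and x y :: "real^'n"
  assumes sym: "\<And>x y. x \<bullet> (P *v y) = y \<bullet> (P *v x)"
    and psd: "\<And>z. 0 \<le> z \<bullet> (P *v z)"
  shows "(x \<bullet> (P *v y))\<^sup>2 \<le> (x \<bullet> (P *v x)) * (y \<bullet> (P *v y))"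
proof (rule quadratic_nonneg_imp_discriminant_le)
  fix t :: real
  have "(x + t *\<^sub>R y) \<bullet> (P *v (x + t *\<^sub>R y))
      = x \<bullet> (P *v x) + t * (x \<bullet> (P *v y)) + t * (y \<bullet> (P *v x)) + t\<^sup>2 * (y \<bullet> (P *v y))"
    by (simp add: matrix_vector_right_distrib matrix_vector_mult_scaleR inner_add_left
        inner_add_right power2_eq_square algebra_simps)
  also have "\<dots> = x \<bullet> (P *v x) + 2 * (x \<bullet> (P *v y)) * t + (y \<bullet> (P *v y)) * t\<^sup>2"
    using sym[of y x] by (simp add: algebra_simps)
  finally show "0 \<le> x \<bullet> (P *v x) + 2 * (x \<bullet> (P *v y)) * t + (y \<bullet> (P *v y)) * t\<^sup>2"
    using psd[of "x + t *\<^sub>R y"] by simp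
qed (rule psd)

lemma symmetric_matrix_max_eigenvalue:
  fixes S :: "real^'n^'n"
  assumes sym: "\<And>x y. x \<bullet> (S *v y) = y \<bullet> (S *v x)"
  shows "\<exists>lam. mat_eigenvalue S lam \<and> (\<forall>x. x \<bullet> (S *v x) \<le> lam * (norm x)\<^sup>2)"
proof -
  let ?f = "\<lambda>x::real^'n. x \<bullet> (S *v x)"
  have cont: "continuous_on (sphere 0 1) ?f"
    by (intro continuous_on_inner continuous_on_id linear_continuous_on matrix_vector_mul_bounded_linear)
  have "sphere (0::real^'n) 1 \<noteq> {}"
    using vector_choose_size[of 1] by auto
  then obtain x0 where x0: "x0 \<in> sphere 0 1" and max: "\<And>y. y \<in> sphere 0 1 \<Longrightarrow> ?f y \<le> ?f x0"
    using continuous_attains_sup[OF compact_sphere _ cont] by blast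
  define lam where "lam = ?f x0"
  have bound: "?f y \<le> lam * (norm y)\<^sup>2" for y
  proof (cases "y = 0")
    case False
    hence "norm y > 0" by simp
    hence "y /\<^sub>R norm y \<in> sphere 0 1" by simp
    hence "?f (y /\<^sub>R norm y) \<le> lam" using max lam_def by blast
    moreover have "?f (y /\<^sub>R norm y) = ?f y / (norm y)\<^sup>2"
      by (simp add: matrix_vector_mult_scaleR power2_eq_square field_simps)
    ultimately show ?thesis using \<open>norm y > 0\<close> by (simp add: field_simps)
  qed simp
  text \<open>\<open>P = \<lambda>I - S\<close> is positive semidefinite with \<open>x0 \<bullet> P x0 = 0\<close>; Cauchy--Schwarz for \<open>P\<close>
    forces \<open>P x0 = 0\<close>.\<close>
  define P where "P = lam *\<^sub>R mat 1 - S"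
  have Pv: "P *v z = lam *\<^sub>R z - S *v z" for z
    by (simp add: P_def matrix_vector_mult_diff_rdistrib scaleR_matrix_vector_assoc[symmetric])
  have Psym: "x \<bullet> (P *v y) = y \<bullet> (P *v x)" for x y
    using sym[of x y] by (simp add: Pv inner_diff_right inner_commute)
  have Ppsd: "0 \<le> z \<bullet> (P *v z)" for z
    using bound[of z] by (simp add: Pv inner_diff_right power2_norm_eq_inner)
  have "norm x0 = 1" using x0 by simp
  hence "x0 \<bullet> (P *v x0) = 0"
    by (simp add: Pv inner_diff_right lam_def power2_norm_eq_inner[symmetric])
  hence "(x0 \<bullet> (P *v (P *v x0)))\<^sup>2 \<le> 0"
    using psd_matrix_Cauchy_Schwarz[OF Psym Ppsd, of x0 "P *v x0"] by simp
  hence "(P *v x0) \<bullet> (P *v x0) = 0"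
    using Psym[of x0 "P *v x0"] by simp
  hence "S *v x0 = lam *\<^sub>R x0" by (simp add: Pv)
  moreover have "x0 \<noteq> 0" using \<open>norm x0 = 1\<close> by auto
  ultimately have "mat_eigenvalue S lam" unfolding mat_eigenvalue_def by blast
  with bound show ?thesis by blast
qed

lemma matrix_vector_mult_uminus_left: "(- S) *v x = - (S *v x)"
  for S :: "real^'n^'m"
  by (simp add: matrix_vector_mult_def sum_negf vec_eq_iff)

lemma symmetric_matrix_min_eigenvalue:
  fixes S :: "real^'n^'n"
  assumes sym: "\<And>x y. x \<bullet> (S *v y) = y \<bullet> (S *v x)"
  shows "\<exists>lam. mat_eigenvalue S lam \<and> (\<forall>x. lam * (norm x)\<^sup>2 \<le> x \<bullet> (S *v x))"
proof -
  have "\<And>x y. x \<bullet> ((- S) *v y) = y \<bullet> ((- S) *v x)"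
    using sym by (simp add: matrix_vector_mult_uminus_left)
  from symmetric_matrix_max_eigenvalue[OF this] obtain mu where mu: "mat_eigenvalue (- S) mu"
    and bound: "\<And>x. x \<bullet> ((- S) *v x) \<le> mu * (norm x)\<^sup>2" by blast
  have "mat_eigenvalue S (- mu)" using mu unfolding mat_eigenvalue_def
    by (auto simp: matrix_vector_mult_uminus_left) (metis minus_equation_iff scaleR_minus_left)
  moreover have "(- mu) * (norm x)\<^sup>2 \<le> x \<bullet> (S *v x)" for x
    using bound[of x] by (simp add: matrix_vector_mult_uminus_left)
  ultimately show ?thesis by blast
qed

lemma quadratic_form_eigenvalue_bounds:
  fixes H :: "real^'n^'n"
  assumes sym: "\<And>x y. x \<bullet> (H *v y) = y \<bullet> (H *v x)"
    and eig: "\<And>lam. mat_eigenvalue H lam \<Longrightarrow> L \<le> lam \<and> lam \<le> M"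
  shows "L * (norm z)\<^sup>2 \<le> z \<bullet> (H *v z)" and "z \<bullet> (H *v z) \<le> M * (norm z)\<^sup>2"
proof -
  obtain l where "mat_eigenvalue H l" "\<And>z. l * (norm z)\<^sup>2 \<le> z \<bullet> (H *v z)"
    using symmetric_matrix_min_eigenvalue[OF sym] by blast
  with eig show "L * (norm z)\<^sup>2 \<le> z \<bullet> (H *v z)"
    by (meson mult_right_mono order_trans zero_le_power2)
next
  obtain l where "mat_eigenvalue H l" "\<And>z. z \<bullet> (H *v z) \<le> l * (norm z)\<^sup>2"
    using symmetric_matrix_max_eigenvalue[OF sym] by blast
  with eig show "z \<bullet> (H *v z) \<le> M * (norm z)\<^sup>2"
    by (meson mult_right_mono order_trans zero_le_power2)
qed

lemma norm_matrix_vector_le_singular_value_bound: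
  fixes A :: "real^'n^'n"
  assumes sing: "\<And>s. mat_singular_value A s \<Longrightarrow> s \<le> B" and "0 \<le> B"
  shows "norm (A *v x) \<le> B * norm x"
proof -
  define S where "S = transpose A ** A"
  have Sv: "y \<bullet> (S *v z) = (A *v y) \<bullet> (A *v z)" for y z
    by (simp add: S_def matrix_vector_mul_assoc[symmetric] inner_commute[of y] dot_lmul_matrix)
      (rule inner_commute)
  have "y \<bullet> (S *v z) = z \<bullet> (S *v y)" for y z by (metis Sv inner_commute)
  then obtain lam where ev: "mat_eigenvalue S lam" and bound: "\<And>y. y \<bullet> (S *v y) \<le> lam * (norm y)\<^sup>2"
    using symmetric_matrix_max_eigenvalue by blast
  from ev obtain v where v: "v \<noteq> 0" "S *v v = lam *\<^sub>R v" unfolding mat_eigenvalue_def by blast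
  have "0 \<le> v \<bullet> (S *v v)" by (simp add: Sv)
  also have "\<dots> = lam * (v \<bullet> v)" using v by simp
  moreover have "v \<bullet> v > 0" using v(1) by simp
  ultimately have "0 \<le> lam" by (simp add: zero_le_mult_iff)
  hence "mat_singular_value A (sqrt lam)" unfolding mat_singular_value_def using ev S_def by simp
  hence "sqrt lam \<le> B" by (rule sing)
  hence "lam \<le> B\<^sup>2" using \<open>0 \<le> lam\<close> \<open>0 \<le> B\<close> by (metis real_sqrt_le_iff real_sqrt_unique)
  have "(norm (A *v x))\<^sup>2 = x \<bullet> (S *v x)" by (simp add: Sv power2_norm_eq_inner)
  also have "\<dots> \<le> lam * (norm x)\<^sup>2" by (rule bound)
  also have "\<dots> \<le> (B * norm x)\<^sup>2"
    using \<open>lam \<le> B\<^sup>2\<close> by (simp add: mult_right_mono power_mult_distrib)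
  finally show ?thesis by (rule power2_le_imp_le) (simp add: \<open>0 \<le> B\<close>)
qed

lemma norm_psd_matrix_vector_le:
  fixes P :: "real^'n^'n"
  assumes sym: "\<And>x y. x \<bullet> (P *v y) = y \<bullet> (P *v x)"
    and psd: "\<And>z. 0 \<le> z \<bullet> (P *v z)"
    and upper: "\<And>z. z \<bullet> (P *v z) \<le> c * (norm z)\<^sup>2"
  shows "norm (P *v x) \<le> c * norm x"
proof -
  let ?y = "P *v x"
  have "0 \<le> c" using upper[of "axis undefined 1"] psd[of "axis undefined 1"] by simp
  have "x \<bullet> (P *v ?y) = (norm ?y)\<^sup>2" using sym[of x ?y] by (simp add: power2_norm_eq_inner)
  hence "((norm ?y)\<^sup>2)\<^sup>2 \<le> (x \<bullet> (P *v x)) * (?y \<bullet> (P *v ?y))"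
    using psd_matrix_Cauchy_Schwarz[OF sym psd, of x ?y] by simp
  also have "\<dots> \<le> (c * (norm x)\<^sup>2) * (c * (norm ?y)\<^sup>2)"
    by (intro mult_mono upper psd) (use \<open>0 \<le> c\<close> in simp)
  finally have h: "(norm ?y)\<^sup>2 * (norm ?y)\<^sup>2 \<le> (c * norm x)\<^sup>2 * (norm ?y)\<^sup>2"
    by (simp add: power2_eq_square algebra_simps)
  have "(norm ?y)\<^sup>2 \<le> (c * norm x)\<^sup>2"
  proof (cases "norm ?y = 0")
    case False thus ?thesis using mult_right_le_imp_le[OF h] by simp
  qed simp
  thus ?thesis by (rule power2_le_imp_le) (simp add: \<open>0 \<le> c\<close>)
qed

lemma norm_gradient_step_matrix_le:
  fixes H :: "real^'n^'n"
  assumes sym: "\<And>x y. x \<bullet> (H *v y) = y \<bullet> (H *v x)"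
    and eig: "\<And>lam. mat_eigenvalue H lam \<Longrightarrow> L \<le> lam \<and> lam \<le> M"
    and "0 \<le> eta" "0 \<le> 1 + eta * L"
  shows "norm (x + eta *\<^sub>R (H *v x)) \<le> (1 + eta * M) * norm x"
proof -
  define P where "P = mat 1 + eta *\<^sub>R H"
  have Pv: "P *v z = z + eta *\<^sub>R (H *v z)" for z
    by (simp add: P_def matrix_vector_mult_add_rdistrib scaleR_matrix_vector_assoc[symmetric])
  have "norm (P *v x) \<le> (1 + eta * M) * norm x"
  proof (rule norm_psd_matrix_vector_le)
    show "y \<bullet> (P *v z) = z \<bullet> (P *v y)" for y z
      using sym[of y z] by (simp add: Pv inner_add_right inner_commute)
    show "0 \<le> z \<bullet> (P *v z)" for z
    proof -
      have "eta * (L * (norm z)\<^sup>2) \<le> eta * (z \<bullet> (H *v z))"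
        using quadratic_form_eigenvalue_bounds(1)[OF sym eig] \<open>0 \<le> eta\<close> by (simp add: mult_left_mono)
      moreover have "0 \<le> (1 + eta * L) * (norm z)\<^sup>2" using \<open>0 \<le> 1 + eta * L\<close> by simp
      ultimately show ?thesis by (simp add: Pv inner_add_right power2_norm_eq_inner algebra_simps)
    qed
    show "z \<bullet> (P *v z) \<le> (1 + eta * M) * (norm z)\<^sup>2" for z
    proof -
      have "eta * (z \<bullet> (H *v z)) \<le> eta * (M * (norm z)\<^sup>2)"
        using quadratic_form_eigenvalue_bounds(2)[OF sym eig] \<open>0 \<le> eta\<close> by (simp add: mult_left_mono)
      thus ?thesis by (simp add: Pv inner_add_right power2_norm_eq_inner algebra_simps)
    qed
  qed
  thus ?thesis by (simp add: Pv)
qed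

lemma has_derivative_partial_fst:
  assumes "((\<lambda>p. f (fst p) (snd p)) has_derivative D) (at (u, u'))"
  shows "((\<lambda>u. f u u') has_derivative (\<lambda>h. D (h, 0))) (at u)"
proof -
  have "((\<lambda>u. (u, u')) has_derivative (\<lambda>h. (h, 0))) (at u)"
    by (intro has_derivative_Pair has_derivative_ident has_derivative_const)
  from has_derivative_compose[OF this assms] show ?thesis by simp
qed

lemma has_derivative_along_line:
  fixes f :: "'a::real_normed_vector \<Rightarrow> 'b::real_normed_vector"
  assumes "\<And>y. (f has_derivative D y) (at y)"
  shows "((\<lambda>\<sigma>::real. f (p + \<sigma> *\<^sub>R a)) has_derivative (\<lambda>t. D (p + \<sigma> *\<^sub>R a) (t *\<^sub>R a))) (at \<sigma>)"
proof -
  have "((\<lambda>\<sigma>::real. p + \<sigma> *\<^sub>R a) has_derivative (\<lambda>t. t *\<^sub>R a)) (at \<sigma>)"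
    by (auto intro!: derivative_eq_intros)
  from has_derivative_compose[OF this assms] show ?thesis .
qed

lemma second_difference_mean_value:
  fixes f :: "real^'n \<Rightarrow> real" and g :: "real^'n \<Rightarrow> real^'n" and H :: "real^'n \<Rightarrow> real^'n^'n"
  assumes df: "\<And>y. (f has_derivative (\<lambda>h. g y \<bullet> h)) (at y)"
    and dg: "\<And>y. (g has_derivative (\<lambda>h. H y *v h)) (at y)"
    and "0 < s"
  shows "\<exists>\<xi>. norm (\<xi> - x) \<le> s * (norm a + norm b) \<and>
     f (x + s *\<^sub>R a + s *\<^sub>R b) - f (x + s *\<^sub>R a) - f (x + s *\<^sub>R b) + f x = s\<^sup>2 * ((H \<xi> *v b) \<bullet> a)"
proof -
  define \<psi> where "\<psi> \<sigma> = f (x + s *\<^sub>R b + \<sigma> *\<^sub>R a) - f (x + \<sigma> *\<^sub>R a)" for \<sigma>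
  have d\<psi>: "(\<psi> has_derivative (\<lambda>t. g (x + s *\<^sub>R b + \<sigma> *\<^sub>R a) \<bullet> (t *\<^sub>R a) - g (x + \<sigma> *\<^sub>R a) \<bullet> (t *\<^sub>R a)))
      (at \<sigma> within {0..s})" for \<sigma>
    unfolding \<psi>_def
    by (rule has_derivative_at_withinI,
        intro has_derivative_diff has_derivative_along_line[where D="\<lambda>y h. g y \<bullet> h"] df)
  obtain \<sigma> where \<sigma>: "\<sigma> \<in> {0<..<s}" and
    \<psi>_diff: "\<psi> s - \<psi> 0 = g (x + s *\<^sub>R b + \<sigma> *\<^sub>R a) \<bullet> ((s - 0) *\<^sub>R a) - g (x + \<sigma> *\<^sub>R a) \<bullet> ((s - 0) *\<^sub>R a)"
    using mvt_simple[OF \<open>0 < s\<close> d\<psi>] by blast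
  define p where "p = x + \<sigma> *\<^sub>R a"
  define \<phi> where "\<phi> \<tau> = g (p + \<tau> *\<^sub>R b) \<bullet> a" for \<tau>
  have d\<phi>: "(\<phi> has_derivative (\<lambda>t. (H (p + \<tau> *\<^sub>R b) *v (t *\<^sub>R b)) \<bullet> a)) (at \<tau> within {0..s})" for \<tau>
    unfolding \<phi>_def
    by (rule has_derivative_at_withinI,
        intro has_derivative_inner_left has_derivative_along_line[where D="\<lambda>y h. H y *v h"] dg)
  obtain \<tau> where \<tau>: "\<tau> \<in> {0<..<s}" and
    \<phi>_diff: "\<phi> s - \<phi> 0 = (H (p + \<tau> *\<^sub>R b) *v ((s - 0) *\<^sub>R b)) \<bullet> a"
    using mvt_simple[OF \<open>0 < s\<close> d\<phi>] by blast
  define \<xi> where "\<xi> = p + \<tau> *\<^sub>R b"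
  have "norm (\<xi> - x) \<le> norm (\<sigma> *\<^sub>R a) + norm (\<tau> *\<^sub>R b)"
    unfolding \<xi>_def p_def by (metis add_diff_cancel_left' add.assoc norm_triangle_ineq)
  also have "\<dots> \<le> s * (norm a + norm b)"
    using \<sigma> \<tau> by (simp add: distrib_left add_mono mult_right_mono)
  finally have "norm (\<xi> - x) \<le> s * (norm a + norm b)" .
  moreover have "f (x + s *\<^sub>R a + s *\<^sub>R b) - f (x + s *\<^sub>R a) - f (x + s *\<^sub>R b) + f x = \<psi> s - \<psi> 0"
    by (simp add: \<psi>_def algebra_simps)
  moreover have "\<dots> = s * (\<phi> s - \<phi> 0)"
    using \<psi>_diff by (simp add: \<phi>_def p_def algebra_simps inner_diff_left)
  moreover have "\<dots> = s\<^sup>2 * ((H \<xi> *v b) \<bullet> a)"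
    using \<phi>_diff by (simp add: \<xi>_def matrix_vector_mult_scaleR power2_eq_square)
  ultimately show ?thesis by metis
qed

lemma bounded_linear_matrix_vector_mult_left: "bounded_linear (\<lambda>A::real^'n^'m. A *v b)"
proof -
  have "linear (\<lambda>A::real^'n^'m. A *v b)"
    by (rule linearI) (simp_all add: matrix_vector_mult_add_rdistrib scaleR_matrix_vector_assoc)
  thus ?thesis by (simp only: linear_conv_bounded_linear)
qed

lemma hessian_symmetric:
  fixes f :: "real^'n \<Rightarrow> real" and g :: "real^'n \<Rightarrow> real^'n" and H :: "real^'n \<Rightarrow> real^'n^'n"
  assumes df: "\<And>y. (f has_derivative (\<lambda>h. g y \<bullet> h)) (at y)"
    and dg: "\<And>y. (g has_derivative (\<lambda>h. H y *v h)) (at y)"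
    and cH: "isCont H x"
  shows "a \<bullet> (H x *v b) = b \<bullet> (H x *v a)"
proof -
  define d1 where "d1 y = (H y *v b) \<bullet> a" for y
  define d2 where "d2 y = (H y *v a) \<bullet> b" for y
  define s where "s n = inverse (real (Suc n))" for n
  define K where "K = norm a + norm b"
  text \<open>Both orders of the second difference of \<open>f\<close> with step \<open>s n\<close> give the same value.\<close>
  have "\<exists>\<xi> \<zeta>. norm (\<xi> - x) \<le> s n * K \<and> norm (\<zeta> - x) \<le> s n * K \<and> d1 \<xi> = d2 \<zeta>" for n
  proof -
    have "0 < s n" by (simp add: s_def)
    obtain \<xi> where \<xi>: "norm (\<xi> - x) \<le> s n * K"
      "f (x + s n *\<^sub>R a + s n *\<^sub>R b) - f (x + s n *\<^sub>R a) - f (x + s n *\<^sub>R b) + f x = (s n)\<^sup>2 * d1 \<xi>"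
      using second_difference_mean_value[OF df dg \<open>0 < s n\<close>, of x a b] unfolding d1_def K_def by blast
    obtain \<zeta> where \<zeta>: "norm (\<zeta> - x) \<le> s n * K"
      "f (x + s n *\<^sub>R b + s n *\<^sub>R a) - f (x + s n *\<^sub>R b) - f (x + s n *\<^sub>R a) + f x = (s n)\<^sup>2 * d2 \<zeta>"
      using second_difference_mean_value[OF df dg \<open>0 < s n\<close>, of x b a] unfolding d2_def K_def
      by (auto simp: add.commute)
    have "(s n)\<^sup>2 * d1 \<xi> = (s n)\<^sup>2 * d2 \<zeta>" using \<xi>(2) \<zeta>(2) by (simp add: algebra_simps)
    with \<open>0 < s n\<close> \<xi>(1) \<zeta>(1) show ?thesis by auto
  qed
  then obtain \<xi> \<zeta> where "\<forall>n. norm (\<xi> n - x) \<le> s n * K \<and> norm (\<zeta> n - x) \<le> s n * K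
      \<and> d1 (\<xi> n) = d2 (\<zeta> n)"
    by metis
  hence \<xi>: "\<And>n. norm (\<xi> n - x) \<le> s n * K" and \<zeta>: "\<And>n. norm (\<zeta> n - x) \<le> s n * K"
    and eq: "\<And>n. d1 (\<xi> n) = d2 (\<zeta> n)" by blast+
  have sK: "(\<lambda>n. s n * K) \<longlonglongrightarrow> 0"
    unfolding s_def by (intro tendsto_mult_left_zero LIMSEQ_inverse_real_of_nat)
  have "(\<lambda>n. \<xi> n - x) \<longlonglongrightarrow> 0" "(\<lambda>n. \<zeta> n - x) \<longlonglongrightarrow> 0"
    by (rule Lim_null_comparison[OF always_eventually sK], use \<xi> \<zeta> in blast)+
  hence "\<xi> \<longlonglongrightarrow> x" "\<zeta> \<longlonglongrightarrow> x" by (simp_all add: LIM_zero_iff)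
  have "isCont (\<lambda>y. H y *v v) x" for v
    using isCont_o2[OF cH linear_continuous_at[OF bounded_linear_matrix_vector_mult_left]] .
  hence "isCont d1 x" "isCont d2 x" unfolding d1_def d2_def by (auto intro: continuous_intros)
  have "(\<lambda>n. d1 (\<xi> n)) \<longlonglongrightarrow> d1 x"
    using isCont_tendsto_compose[OF \<open>isCont d1 x\<close> \<open>\<xi> \<longlonglongrightarrow> x\<close>] .
  moreover have "(\<lambda>n. d1 (\<xi> n)) \<longlonglongrightarrow> d2 x"
    unfolding eq using isCont_tendsto_compose[OF \<open>isCont d2 x\<close> \<open>\<zeta> \<longlonglongrightarrow> x\<close>] .
  ultimately have "d1 x = d2 x" by (rule LIMSEQ_unique)
  thus ?thesis by (simp add: d1_def d2_def inner_commute)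
qed

lemma hessian_fst_symmetric:
  fixes F :: "real^'n \<Rightarrow> real^'n \<Rightarrow> real"
    and G1 G2 :: "real^'n \<Rightarrow> real^'n \<Rightarrow> real^'n"
    and H11 H12 :: "real^'n \<Rightarrow> real^'n \<Rightarrow> real^'n^'n"
  assumes dF: "\<And>u u'. ((\<lambda>p. F (fst p) (snd p)) has_derivative
                 (\<lambda>h. G1 u u' \<bullet> fst h + G2 u u' \<bullet> snd h)) (at (u, u'))"
    and dG1: "\<And>u u'. ((\<lambda>p. G1 (fst p) (snd p)) has_derivative
                 (\<lambda>h. H11 u u' *v fst h + H12 u u' *v snd h)) (at (u, u'))"
    and cH11: "continuous_on UNIV (\<lambda>p. H11 (fst p) (snd p))"
  shows "a \<bullet> (H11 u u' *v b) = b \<bullet> (H11 u u' *v a)"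
proof (rule hessian_symmetric[where f="\<lambda>v. F v u'" and g="\<lambda>v. G1 v u'" and H="\<lambda>v. H11 v u'"])
  show "((\<lambda>u. F u u') has_derivative (\<lambda>h. G1 y u' \<bullet> h)) (at y)" for y
    using has_derivative_partial_fst[OF dF[of y u']] by simp
  show "((\<lambda>u. G1 u u') has_derivative (\<lambda>h. H11 y u' *v h)) (at y)" for y
    using has_derivative_partial_fst[OF dG1[of y u']] by simp
  have "isCont (\<lambda>p. H11 (fst p) (snd p)) (u, u')"
    using cH11 by (simp add: continuous_on_eq_continuous_at)
  moreover have "isCont (\<lambda>v. (v, u')) u" by (intro continuous_intros)
  ultimately show "isCont (\<lambda>v. H11 v u') u" using isCont_o2 by fastforce
qed

lemma gradient_zero_at_max:
  fixes f :: "'a::real_inner \<Rightarrow> real"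
  assumes "(f has_derivative (\<lambda>h. g \<bullet> h)) (at x)" and "\<And>y. f y \<le> f x"
  shows "g = 0"
proof -
  have "(\<lambda>h. g \<bullet> h) = (\<lambda>h. 0)"
    by (rule differential_zero_maxmin[OF _ open_UNIV assms(1)]) (use assms(2) in auto)
  hence "g \<bullet> g = 0" by metis
  thus ?thesis by simp
qed

lemma PD_fixed_point_at_argmax:
  assumes "((\<lambda>p. F (fst p) (snd p)) has_derivative
             (\<lambda>h. G1 x x \<bullet> fst h + G2 x x \<bullet> snd h)) (at (x, x))"
    and "\<And>u. F u x \<le> F x x"
  shows "PD G1 x x eta = x"
proof -
  have "((\<lambda>u. F u x) has_derivative (\<lambda>h. G1 x x \<bullet> h)) (at x)"
    using has_derivative_partial_fst[OF assms(1)] by simp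
  hence "G1 x x = 0" using gradient_zero_at_max assms(2) by blast
  thus ?thesis by (simp add: PD_def)
qed

lemma norm_PD_diff_le:
  fixes G :: "real^'n \<Rightarrow> real^'n \<Rightarrow> real^'n" and H1 H2 :: "real^'n \<Rightarrow> real^'n \<Rightarrow> real^'n^'n"
  assumes dG: "\<And>u u'. ((\<lambda>p. G (fst p) (snd p)) has_derivative
                 (\<lambda>h. H1 u u' *v fst h + H2 u u' *v snd h)) (at (u, u'))"
    and step: "\<And>u u' h. norm (h + eta *\<^sub>R (H1 u u' *v h)) \<le> c * norm h"
    and cross: "\<And>u u' k. norm (H2 u u' *v k) \<le> B * norm k"
    and "0 \<le> eta"
  shows "norm (PD G v u eta - PD G v' u' eta) \<le> c * norm (v - v') + eta * B * norm (u - u')"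
proof -
  define h where "h = v - v'"
  define k where "k = u - u'"
  define r where "r t = (v' + t *\<^sub>R h, u' + t *\<^sub>R k)" for t :: real
  define g where "g t = PD G (fst (r t)) (snd (r t)) eta" for t
  define D where "D t = (\<lambda>s. s *\<^sub>R h + eta *\<^sub>R (H1 (fst (r t)) (snd (r t)) *v (s *\<^sub>R h)
      + H2 (fst (r t)) (snd (r t)) *v (s *\<^sub>R k)))" for t
  have dg: "(g has_derivative D t) (at t)" for t
  proof -
    have "(r has_derivative (\<lambda>s. (s *\<^sub>R h, s *\<^sub>R k))) (at t)"
      unfolding r_def by (auto intro!: derivative_eq_intros)
    from has_derivative_compose[OF this dG[of "fst (r t)" "snd (r t)", unfolded prod.collapse]]
    have "((\<lambda>t. G (fst (r t)) (snd (r t))) has_derivative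
       (\<lambda>s. H1 (fst (r t)) (snd (r t)) *v (s *\<^sub>R h) + H2 (fst (r t)) (snd (r t)) *v (s *\<^sub>R k))) (at t)"
      by simp
    moreover have "((\<lambda>t. fst (r t)) has_derivative (\<lambda>s. s *\<^sub>R h)) (at t)"
      unfolding r_def by (auto intro!: derivative_eq_intros)
    ultimately show ?thesis unfolding g_def D_def PD_def
      by (intro has_derivative_add has_derivative_scaleR_right)
  qed
  have "continuous_on {0..1} g"
    using dg by (meson has_derivative_continuous continuous_at_imp_continuous_on)
  then obtain t where "norm (g 1 - g 0) \<le> norm (D t (1 - 0))"
    using mvt_general[OF zero_less_one _ dg] by blast
  also have "D t (1 - 0) = (h + eta *\<^sub>R (H1 (fst (r t)) (snd (r t)) *v h))
      + eta *\<^sub>R (H2 (fst (r t)) (snd (r t)) *v k)"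
    by (simp add: D_def scaleR_add_right)
  also have "norm \<dots> \<le> norm (h + eta *\<^sub>R (H1 (fst (r t)) (snd (r t)) *v h))
      + norm (eta *\<^sub>R (H2 (fst (r t)) (snd (r t)) *v k))"
    by (rule norm_triangle_ineq)
  also have "\<dots> \<le> c * norm h + eta * (B * norm k)"
    using step cross \<open>0 \<le> eta\<close> by (intro add_mono) (auto intro: mult_left_mono)
  finally show ?thesis
    by (simp add: g_def r_def h_def k_def)
qed

lemma norm_frozen_iterates_le:
  fixes S :: "'a::real_normed_vector \<Rightarrow> 'a \<Rightarrow> 'a"
  assumes S: "\<And>u v. norm (S u v - x) \<le> c * norm (v - x) + b * norm (u - x)"
    and "0 \<le> c" "0 \<le> b" "c + b \<le> 1" "1 \<le> N"
  shows "norm ((S u ^^ N) u - x) \<le> (c + b) * norm (u - x)"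
proof -
  define d where "d = norm (u - x)"
  have step: "norm (S u v - x) \<le> (c + b) * d" if "norm (v - x) \<le> d" for v
  proof -
    have "norm (S u v - x) \<le> c * norm (v - x) + b * d" using S by (simp add: d_def)
    also have "\<dots> \<le> c * d + b * d" using that \<open>0 \<le> c\<close> by (simp add: mult_left_mono)
    finally show ?thesis by (simp add: algebra_simps)
  qed
  have "(c + b) * d \<le> d"
    using \<open>c + b \<le> 1\<close> \<open>0 \<le> c\<close> \<open>0 \<le> b\<close> by (simp add: d_def mult_left_le_one_le)
  hence stay: "norm ((S u ^^ j) u - x) \<le> d" for j
    by (induction j) (auto simp: d_def intro: order_trans[OF step])
  obtain m where "N = Suc m" using \<open>1 \<le> N\<close> by (cases N) auto
  thus ?thesis using step[OF stay[of m]] by (simp add: d_def)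
qed

lemma iterates_tendsto_of_contracting_to:
  fixes T :: "'a::real_normed_vector \<Rightarrow> 'a"
  assumes T: "\<And>u. norm (T u - x) \<le> q * norm (u - x)" and "0 \<le> q" "q < 1"
  shows "(\<lambda>k. (T ^^ k) u0) \<longlonglongrightarrow> x"
proof -
  have bound: "norm ((T ^^ k) u0 - x) \<le> q ^ k * norm (u0 - x)" for k
  proof (induction k)
    case (Suc k)
    have "norm ((T ^^ Suc k) u0 - x) \<le> q * norm ((T ^^ k) u0 - x)" using T by simp
    also have "\<dots> \<le> q * (q ^ k * norm (u0 - x))" using Suc \<open>0 \<le> q\<close> by (simp add: mult_left_mono)
    finally show ?case by simp
  qed simp
  have lim: "(\<lambda>k. q ^ k * norm (u0 - x)) \<longlonglongrightarrow> 0"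
    using \<open>0 \<le> q\<close> \<open>q < 1\<close> by (intro tendsto_mult_left_zero LIMSEQ_power_zero) auto
  have "(\<lambda>k. (T ^^ k) u0 - x) \<longlonglongrightarrow> 0"
    by (rule Lim_null_comparison[OF always_eventually lim]) (use bound in blast)
  thus ?thesis by (rule LIM_zero_cancel)
qed

theorem mainTheorem1:
  fixes F :: "real^'n \<Rightarrow> real^'n \<Rightarrow> real"
    and G1 G2 :: "real^'n \<Rightarrow> real^'n \<Rightarrow> real^'n"
    and H11 H12 H21 H22 :: "real^'n \<Rightarrow> real^'n \<Rightarrow> real^'n^'n"
    and L M M' eta :: real
    and ustar :: "real^'n"
  assumes dF: "\<And>u u'. ((\<lambda>p. F (fst p) (snd p)) has_derivative
                 (\<lambda>h. G1 u u' \<bullet> fst h + G2 u u' \<bullet> snd h)) (at (u, u'))"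
    and dG1: "\<And>u u'. ((\<lambda>p. G1 (fst p) (snd p)) has_derivative
                 (\<lambda>h. H11 u u' *v fst h + H12 u u' *v snd h)) (at (u, u'))"
    and dG2: "\<And>u u'. ((\<lambda>p. G2 (fst p) (snd p)) has_derivative
                 (\<lambda>h. H21 u u' *v fst h + H22 u u' *v snd h)) (at (u, u'))"
    and cH11: "continuous_on UNIV (\<lambda>p. H11 (fst p) (snd p))"
    and cH12: "continuous_on UNIV (\<lambda>p. H12 (fst p) (snd p))"
    and cH21: "continuous_on UNIV (\<lambda>p. H21 (fst p) (snd p))"
    and cH22: "continuous_on UNIV (\<lambda>p. H22 (fst p) (snd p))"
    and LM: "L \<le> M" "M < 0"
    and M'pos: "0 \<le> M'" "M' < - M"
    and eig: "\<And>u u' lam. mat_eigenvalue (H11 u u') lam \<Longrightarrow> L \<le> lam \<and> lam \<le> M"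
    and sing: "\<And>u u' s. mat_singular_value (H12 u u') s \<Longrightarrow> s \<le> M'"
    and argmax: "\<And>u. F u ustar \<le> F ustar ustar"
    and eta: "0 < eta" "eta < - 1 / (2 * L)"
  shows "(\<forall>u0. (\<lambda>k. ((\<lambda>u. PD G1 u u eta) ^^ k) u0) \<longlonglongrightarrow> ustar)
       \<and> (\<forall>Nt::nat. Nt \<ge> 1 \<longrightarrow> (\<forall>u0. (\<lambda>k. (U_iter G1 eta Nt ^^ k) u0) \<longlonglongrightarrow> ustar))"
proof -
  define c where "c = 1 + eta * M"
  have "- 1 / 2 < eta * L"
    using eta LM by (simp add: field_simps)
  moreover have "eta * L \<le> eta * M" using LM eta by (simp add: mult_left_mono)
  ultimately have "0 \<le> 1 + eta * L" "0 \<le> c" by (simp_all add: c_def)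
  have "eta * (M + M') < 0" using eta M'pos by (simp add: mult_pos_neg)
  hence "c + eta * M' < 1" by (simp add: c_def algebra_simps)
  note rate = \<open>0 \<le> c\<close> eta(1) M'pos(1) \<open>c + eta * M' < 1\<close>
  have lipschitz: "norm (PD G1 v u eta - PD G1 v' u' eta)
      \<le> c * norm (v - v') + eta * M' * norm (u - u')" for v u v' u'
    using norm_gradient_step_matrix_le[OF hessian_fst_symmetric[OF dF dG1 cH11] eig]
      norm_matrix_vector_le_singular_value_bound[OF sing M'pos(1)] eta(1) \<open>0 \<le> 1 + eta * L\<close>
    unfolding c_def by (intro norm_PD_diff_le[OF dG1]) auto
  have towards: "norm (PD G1 v u eta - ustar)
      \<le> c * norm (v - ustar) + eta * M' * norm (u - ustar)" for v u
    using lipschitz[of v u ustar ustar] PD_fixed_point_at_argmax[of F G1 ustar G2, OF dF argmax] by simp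
  have contract: "norm (U_iter G1 eta N u - ustar) \<le> (c + eta * M') * norm (u - ustar)"
    if "1 \<le> N" for N u
    unfolding U_iter_def
    by (rule norm_frozen_iterates_le[where S="\<lambda>u v. PD G1 v u eta", OF towards])
      (use rate that in auto)
  have conv: "(\<lambda>k. (U_iter G1 eta N ^^ k) u0) \<longlonglongrightarrow> ustar" if "1 \<le> N" for N u0
    by (rule iterates_tendsto_of_contracting_to[OF contract[OF that]])
      (use rate in auto)
  have "U_iter G1 eta 1 = (\<lambda>u. PD G1 u u eta)"
    by (simp add: U_iter_def fun_eq_iff)
  hence "(\<lambda>k. ((\<lambda>u. PD G1 u u eta) ^^ k) u0) \<longlonglongrightarrow> ustar" for u0
    using conv[of 1 u0] by simp
  with conv show ?thesis by blast
qed

end
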